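(* Let $\mathit{LR}$ be the graded dual Hopf algebra of $\mathcal{Y}Sym$ and $\{M^*_t\}$ the basis dual to $\{M_t\}$. Then $\mathit{LR}$ is the free associative algebra generated by $\{M^*_t: t\text{ progressive}\}$, and $M^*_s\cdot M^*_t=M^*_{s\backslash t}$ for all trees $s,t$.
   Context: $\mathcal{Y}_n$ = rooted planar binary trees with $n$ internal nodes, $\mathcal{Y}_0=\{|\}$; $s\vee t$ = tree whose root has left subtree $s$ and right subtree $t$; $t=t_l\vee t_r$ uniquely for $t\ne|$. Tamari order on $\mathcal{Y}_n$: generated by replacing a subtree $(a\vee b)\vee c$ by the larger $a\vee(b\vee c)$. $|\backslash t=t$, $s\backslash t=s_l\vee(s_r\backslash t)$. A tree $t\ne|$ is progressive if $t_r=|$. $\mathcal{Y}Sym$ is the graded connected Hopf algebra over $\mathbb{Q}$ with basis $F_t$ ($t\in\bigsqcup_n\mathcal{Y}_n$, degree $n$ for $t\in\mathcal{Y}_n$). Leaves of $t\in\mathcal{Y}_p$ are numbered $0..p$; splitting at leaf $i$, $t\to(t_0,t_1)$: $|\to(|,|)$; for $t=t_l\vee t_r$, $t\to(a,b\vee t_r)$ if leaf $i$ is in $t_l$ and $t_l\to(a,b)$ there, $t\to(t_l\vee c,d)$ if in $t_r$ and $t_r\to(c,d)$. $\Delta(F_t)=\sum_iF_{t_0}\otimes F_{t_1}$. For $s\in\mathcal{Y}_q$: $F_t\cdot F_s=\sum F_{(t_0,\dots,t_q)/s}$ over multisets $i_1\le\dots\le i_q$ of leaves of $t$, where the division $t\to(t_0,\dots,t_q)$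 splits $t$ at $i_q$ into $(t',t_q)$ then divides $t'$ at $i_1,..,i_{q-1}$, and $(t_0,..,t_q)/s$ grafts the root of $t_i$ on the $i$-th leaf ($0\le i\le q$) of $s$. $M_t=\sum_{t\le s}\mu_{\mathcal{Y}_n}(t,s)F_s$ (Möbius function of Tamari order). The product of $\mathit{LR}$ is dual to the coproduct of $\mathcal{Y}Sym$ and vice versa. *)

theory Defs
  imports Complex_Main
begin

text \<open>Rooted planar binary trees: Leaf is the tree with no internal node,
  Node s t is s \<or> t (left subtree s, right subtree t).\<close>
datatype tree = Leaf | Node tree tree

fun nodes :: "tree \<Rightarrow> nat" where
  "nodes Leaf = 0"
| "nodes (Node l r) = Suc (nodes l + nodes r)"

inductive rot :: "tree \<Rightarrow> tree \<Rightarrow> bool" where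
  rot_root: "rot (Node (Node a b) c) (Node a (Node b c))"
| rot_left: "rot l l' \<Longrightarrow> rot (Node l r) (Node l' r)"
| rot_right: "rot r r' \<Longrightarrow> rot (Node l r) (Node l r')"

definition tamari_le :: "tree \<Rightarrow> tree \<Rightarrow> bool" where
  "tamari_le = rot\<^sup>*\<^sup>*"

definition tamari_lt :: "tree \<Rightarrow> tree \<Rightarrow> bool" where
  "tamari_lt s t \<longleftrightarrow> tamari_le s t \<and> s \<noteq> t"

definition mobius :: "tree \<Rightarrow> tree \<Rightarrow> rat" where
  "mobius = (THE \<mu>. \<forall>t s. \<mu> t s =
      (if t = s then 1
       else if tamari_lt t s then - (\<Sum>u\<in>{u. tamari_le t u \<and> tamari_lt u s}. \<mu> t u)
       else 0))"

text \<open>splitting a tree at leaf i (leaves numbered 0..nodes t from left to right)\<close>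
fun split_at :: "tree \<Rightarrow> nat \<Rightarrow> tree \<times> tree" where
  "split_at Leaf i = (Leaf, Leaf)"
| "split_at (Node l r) i =
     (if i \<le> nodes l then (let (a, b) = split_at l i in (a, Node b r))
      else (let (c, d) = split_at r (i - nodes l - 1) in (Node l c, d)))"

fun under :: "tree \<Rightarrow> tree \<Rightarrow> tree" where
  "under Leaf t = t"
| "under (Node l r) t = Node l (under r t)"

definition progressive :: "tree \<Rightarrow> bool" where
  "progressive t \<longleftrightarrow> (\<exists>l. t = Node l Leaf)"

text \<open>Elements of YSym and of its graded dual LR are both represented by
  finitely supported coefficient functions on trees. For YSym, x u is the
  coefficient of F_u; for LR, \<phi> u is the value of the functional on F_u.
  (Graded dual: finite sums of homogeneous functionals; each Y_n is finite.)\<close>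
definition fin_supp :: "(tree \<Rightarrow> rat) \<Rightarrow> bool" where
  "fin_supp f \<longleftrightarrow> finite {t. f t \<noteq> 0}"

definition LR :: "(tree \<Rightarrow> rat) set" where
  "LR = {\<phi>. fin_supp \<phi>}"

definition M :: "tree \<Rightarrow> (tree \<Rightarrow> rat)" where
  "M t = (\<lambda>s. if tamari_le t s then mobius t s else 0)"

definition pair :: "(tree \<Rightarrow> rat) \<Rightarrow> (tree \<Rightarrow> rat) \<Rightarrow> rat" where
  "pair \<phi> x = (\<Sum>u\<in>{u. x u \<noteq> 0}. \<phi> u * x u)"

definition Mdual :: "tree \<Rightarrow> (tree \<Rightarrow> rat)" where
  "Mdual t = (THE \<phi>. \<phi> \<in> LR \<and> (\<forall>s. pair \<phi> (M s) = (if s = t then 1 else 0)))"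

text \<open>product of LR, dual to the coproduct
  \<Delta>(F_t) = \<Sum>_i F_{t_0} \<otimes> F_{t_1} of YSym\<close>
definition lr_mult :: "(tree \<Rightarrow> rat) \<Rightarrow> (tree \<Rightarrow> rat) \<Rightarrow> (tree \<Rightarrow> rat)" where
  "lr_mult \<phi> \<psi> = (\<lambda>t. \<Sum>i\<le>nodes t. \<phi> (fst (split_at t i)) * \<psi> (snd (split_at t i)))"

definition lr_one :: "tree \<Rightarrow> rat" where
  "lr_one = (\<lambda>t. if t = Leaf then 1 else 0)"

definition lr_scale :: "rat \<Rightarrow> (tree \<Rightarrow> rat) \<Rightarrow> (tree \<Rightarrow> rat)" where
  "lr_scale c \<phi> = (\<lambda>t. c * \<phi> t)"

definition word_mono :: "tree list \<Rightarrow> (tree \<Rightarrow> rat)" where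
  "word_mono ws = foldr lr_mult (map Mdual ws) lr_one"

definition free_assoc_on :: "'a set \<Rightarrow> ('a \<Rightarrow> (tree \<Rightarrow> rat)) \<Rightarrow> bool" where
  "free_assoc_on X g \<longleftrightarrow>
     (\<forall>a\<in>LR. \<forall>b\<in>LR. \<forall>c\<in>LR. lr_mult (lr_mult a b) c = lr_mult a (lr_mult b c)) \<and>
     (\<forall>a\<in>LR. lr_mult lr_one a = a \<and> lr_mult a lr_one = a) \<and>
     (\<forall>W c. finite W \<longrightarrow> W \<subseteq> lists X \<longrightarrow>
        (\<lambda>t. \<Sum>w\<in>W. c w * foldr lr_mult (map g w) lr_one t) = (\<lambda>t. 0) \<longrightarrow>
        (\<forall>w\<in>W. c w = 0)) \<and>
     (\<forall>\<phi>\<in>LR. \<exists>W c. finite W \<and> W \<subseteq> lists X \<and>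
        \<phi> = (\<lambda>t. \<Sum>w\<in>W. c w * foldr lr_mult (map g w) lr_one t))"

end

theory Submission
  imports Defs
begin

text \<open>The dual basis element M*_t is the indicator function of the principal
  down-set {u. u \<le> t} of the Tamari order, because M is the Moebius inversion
  of F. Splitting a tree u at leaf |s| is Tamari-monotone, and u lies below the
  \<setminus>-product of its two pieces; hence u \<le> s \<setminus> t exactly when the two
  pieces lie below s and t, which is the identity M*_s M*_t = M*_(s \<setminus> t).
  Every tree is uniquely t_1 \<setminus> ... \<setminus> t_k with progressive t_i, so the monomials
  in the progressive generators are exactly the indicators of principal down-sets,
  and these form a basis by triangularity with respect to the Tamari order.\<close>

lemma rot_nodes: "rot u v \<Longrightarrow> nodes u = nodes v"
  by (induction rule: rot.induct) auto

fun right_weight :: "tree \<Rightarrow> nat" where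
  "right_weight Leaf = 0"
| "right_weight (Node l r) = right_weight l + right_weight r + nodes r"

lemma rot_right_weight_less: "rot u v \<Longrightarrow> right_weight u < right_weight v"
  by (induction rule: rot.induct) (auto simp: rot_nodes)

lemma rot_imp_tamari_le: "rot u v \<Longrightarrow> tamari_le u v"
  unfolding tamari_le_def by auto

lemma tamari_le_refl [simp]: "tamari_le u u"
  unfolding tamari_le_def by simp

lemma tamari_le_trans [trans]: "tamari_le u v \<Longrightarrow> tamari_le v w \<Longrightarrow> tamari_le u w"
  unfolding tamari_le_def by (rule rtranclp_trans)

lemma tamari_le_nodes: "tamari_le u v \<Longrightarrow> nodes u = nodes v"
  unfolding tamari_le_def by (induction rule: rtranclp_induct) (auto dest: rot_nodes)

lemma tamari_le_right_weight: "tamari_le u v \<Longrightarrow> right_weight u \<le> right_weight v"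
  unfolding tamari_le_def
  by (induction rule: rtranclp_induct) (auto dest: rot_right_weight_less)

lemma tamari_lt_right_weight_less: "tamari_lt u v \<Longrightarrow> right_weight u < right_weight v"
proof -
  assume "tamari_lt u v"
  then have "rot\<^sup>+\<^sup>+ u v"
    unfolding tamari_lt_def tamari_le_def by (auto dest: rtranclpD)
  then show ?thesis
    by (induction rule: tranclp_induct) (auto dest: rot_right_weight_less)
qed

lemma tamari_le_antisym: "tamari_le u v \<Longrightarrow> tamari_le v u \<Longrightarrow> u = v"
  using tamari_lt_right_weight_less tamari_le_right_weight
  by (fastforce simp: tamari_lt_def)

interpretation tamari: order tamari_le tamari_lt
  by unfold_locales
    (auto simp: tamari_lt_def intro: tamari_le_trans dest: tamari_le_antisym)

lemma tamari_le_Node_left: "tamari_le l l' \<Longrightarrow> tamari_le (Node l r) (Node l' r)"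
  unfolding tamari_le_def
  by (induction rule: rtranclp_induct) (auto intro: rtranclp.rtrancl_into_rtrancl rot_left)

lemma tamari_le_Node_right: "tamari_le r r' \<Longrightarrow> tamari_le (Node l r) (Node l r')"
  unfolding tamari_le_def
  by (induction rule: rtranclp_induct) (auto intro: rtranclp.rtrancl_into_rtrancl rot_right)

lemma finite_nodes_le: "finite {t. nodes t \<le> n}"
proof (induction n)
  case 0
  have "{t. nodes t \<le> 0} = {Leaf}"
    by (auto elim: nodes.elims)
  then show ?case by simp
next
  case (Suc n)
  let ?A = "{t. nodes t \<le> n}"
  have "{t. nodes t \<le> Suc n} \<subseteq> insert Leaf (case_prod Node ` (?A \<times> ?A))"
  proof
    fix t assume "t \<in> {t. nodes t \<le> Suc n}"
    then show "t \<in> insert Leaf (case_prod Node ` (?A \<times> ?A))"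
      by (cases t) auto
  qed
  then show ?case
    using Suc by (auto intro: finite_subset)
qed

lemma finite_tamari_up: "finite {v. tamari_le s v}"
  by (rule finite_subset[OF _ finite_nodes_le[of "nodes s"]]) (auto dest: tamari_le_nodes)

lemma finite_tamari_down: "finite {v. tamari_le v s}"
  by (rule finite_subset[OF _ finite_nodes_le[of "nodes s"]]) (auto dest: tamari_le_nodes)

function mobius_rec :: "tree \<Rightarrow> tree \<Rightarrow> rat" where
  "mobius_rec t s = (if t = s then 1
       else if tamari_lt t s then - (\<Sum>u\<in>{u. tamari_le t u \<and> tamari_lt u s}. mobius_rec t u)
       else 0)"
  by auto
termination
  by (relation "measure (\<lambda>(t, s). right_weight s)") (auto intro: tamari_lt_right_weight_less)

declare mobius_rec.simps [simp del]

lemma mobius_rec_unique: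
  assumes rec: "\<And>t s. \<mu> t s = (if t = s then 1
       else if tamari_lt t s then - (\<Sum>u\<in>{u. tamari_le t u \<and> tamari_lt u s}. \<mu> t u)
       else 0)"
  shows "\<mu> = mobius_rec"
proof (intro ext)
  fix t s
  show "\<mu> t s = mobius_rec t s"
  proof (induction s rule: measure_induct_rule[where f = right_weight])
    case (less s)
    then have "\<mu> t u = mobius_rec t u" if "tamari_lt u s" for u
      using that tamari_lt_right_weight_less by blast
    then show ?case
      by (subst rec, subst mobius_rec.simps) (auto intro!: sum.cong)
  qed
qed

lemma mobius_eq_mobius_rec: "mobius = mobius_rec"
  unfolding mobius_def
proof (rule the_equality)
  show "\<forall>t s. mobius_rec t s = (if t = s then 1
       else if tamari_lt t s then - (\<Sum>u\<in>{u. tamari_le t u \<and> tamari_lt u s}. mobius_rec t u)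
       else 0)"
    by (metis mobius_rec.simps)
qed (use mobius_rec_unique in blast)

lemma mobius_unfold: "mobius t s = (if t = s then 1
       else if tamari_lt t s then - (\<Sum>u\<in>{u. tamari_le t u \<and> tamari_lt u s}. mobius t u)
       else 0)"
  unfolding mobius_eq_mobius_rec by (rule mobius_rec.simps)

lemma mobius_diag [simp]: "mobius t t = 1"
  by (simp add: mobius_unfold[of t t])

lemma sum_mobius_interval:
  "(\<Sum>u\<in>{u. tamari_le s u \<and> tamari_le u t}. mobius s u) = (if s = t then 1 else 0)"
proof (cases "tamari_lt s t")
  case True
  have fin: "finite {u. tamari_le s u \<and> tamari_lt u t}"
    by (rule finite_subset[OF _ finite_tamari_up[of s]]) auto
  have "{u. tamari_le s u \<and> tamari_le u t} = insert t {u. tamari_le s u \<and> tamari_lt u t}"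
    using True by (auto simp: tamari_lt_def)
  then have "(\<Sum>u\<in>{u. tamari_le s u \<and> tamari_le u t}. mobius s u)
      = mobius s t + (\<Sum>u\<in>{u. tamari_le s u \<and> tamari_lt u t}. mobius s u)"
    using fin by (simp add: tamari_lt_def)
  then show ?thesis
    using True mobius_unfold[of s t] by (simp add: tamari_lt_def)
next
  case False
  then have "{u. tamari_le s u \<and> tamari_le u t} = (if s = t then {s} else {})"
    by (auto simp: tamari_lt_def intro: tamari_le_antisym dest: tamari_le_trans)
  then show ?thesis
    by simp
qed

definition down_indicator :: "tree \<Rightarrow> tree \<Rightarrow> rat" where
  "down_indicator t = (\<lambda>u. if tamari_le u t then 1 else 0)"

lemma down_indicator_in_LR: "down_indicator t \<in> LR"
  unfolding LR_def fin_supp_def down_indicator_def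
  by (auto intro: finite_subset[OF _ finite_tamari_down[of t]])

lemma pair_down_indicator_M: "pair (down_indicator t) (M s) = (if s = t then 1 else 0)"
proof -
  have "pair (down_indicator t) (M s) = (\<Sum>u\<in>{u. tamari_le s u}. down_indicator t u * M s u)"
    unfolding pair_def
    by (rule sum.mono_neutral_left) (auto simp: finite_tamari_up M_def split: if_splits)
  also have "\<dots> = (\<Sum>u\<in>{u. tamari_le s u \<and> tamari_le u t}. mobius s u)"
    by (rule sum.mono_neutral_cong_right) (auto simp: finite_tamari_up down_indicator_def M_def)
  finally show ?thesis
    by (simp add: sum_mobius_interval)
qed

lemma pair_M_eq_zero_imp_zero:
  assumes "fin_supp \<chi>" and "\<And>s. pair \<chi> (M s) = 0"
  shows "\<chi> = (\<lambda>_. 0)"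
proof (rule ccontr)
  let ?S = "{u. \<chi> u \<noteq> 0}"
  assume "\<chi> \<noteq> (\<lambda>_. 0)"
  then have "?S \<noteq> {}" by auto
  then obtain s where s: "s \<in> ?S" and max: "\<And>u. u \<in> ?S \<Longrightarrow> tamari_le s u \<Longrightarrow> s = u"
    using tamari.finite_has_maximal[of ?S] assms(1) unfolding fin_supp_def by blast
  have M_diag: "M s s = 1"
    by (simp add: M_def)
  have "\<chi> u * M s u = 0" if "M s u \<noteq> 0" "u \<noteq> s" for u
    using that max[of u] by (auto simp: M_def split: if_splits)
  then have "pair \<chi> (M s) = (\<Sum>u\<in>{u. M s u \<noteq> 0}. if u = s then \<chi> s else 0)"
    unfolding pair_def by (intro sum.cong) (auto simp: M_diag)
  also have "\<dots> = \<chi> s"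
    using M_diag by (simp add: finite_subset[OF _ finite_tamari_up[of s]] M_def)
  finally show False
    using assms(2) s by simp
qed

lemma Mdual_eq_down_indicator: "Mdual t = down_indicator t"
  unfolding Mdual_def
proof (rule the_equality)
  show "down_indicator t \<in> LR \<and> (\<forall>s. pair (down_indicator t) (M s) = (if s = t then 1 else 0))"
    using down_indicator_in_LR pair_down_indicator_M by simp
next
  fix \<phi> assume \<phi>: "\<phi> \<in> LR \<and> (\<forall>s. pair \<phi> (M s) = (if s = t then 1 else 0))"
  let ?\<chi> = "\<lambda>u. \<phi> u - down_indicator t u"
  have "{u. ?\<chi> u \<noteq> 0} \<subseteq> {u. \<phi> u \<noteq> 0} \<union> {u. down_indicator t u \<noteq> 0}"
    by auto
  then have "fin_supp ?\<chi>"
    using \<phi> down_indicator_in_LR unfolding LR_def fin_supp_def by (auto intro: finite_subset)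
  moreover have "pair ?\<chi> (M s) = pair \<phi> (M s) - pair (down_indicator t) (M s)" for s
    unfolding pair_def by (simp add: sum_subtractf left_diff_distrib)
  ultimately have "?\<chi> = (\<lambda>_. 0)"
    using \<phi> pair_down_indicator_M by (intro pair_M_eq_zero_imp_zero) auto
  then show "\<phi> = down_indicator t"
    by (simp add: fun_eq_iff)
qed

lemma split_at_Node_le:
  "i \<le> nodes l \<Longrightarrow> split_at (Node l r) i = (fst (split_at l i), Node (snd (split_at l i)) r)"
  by (simp add: split_def Let_def)

lemma split_at_Node_gt:
  "\<not> i \<le> nodes l \<Longrightarrow> split_at (Node l r) i =
     (Node l (fst (split_at r (i - nodes l - 1))), snd (split_at r (i - nodes l - 1)))"
  by (simp add: split_def Let_def)

declare split_at.simps(2) [simp del]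

lemma nodes_split_at:
  "i \<le> nodes t \<Longrightarrow> nodes (fst (split_at t i)) = i \<and> nodes (snd (split_at t i)) = nodes t - i"
proof (induction t arbitrary: i)
  case (Node l r)
  show ?case
  proof (cases "i \<le> nodes l")
    case True
    then show ?thesis using Node.IH(1) by (simp add: split_at_Node_le)
  next
    case False
    then show ?thesis
      using Node.IH(2)[of "i - nodes l - 1"] Node.prems by (simp add: split_at_Node_gt)
  qed
qed simp

lemma split_at_0: "split_at t 0 = (Leaf, t)"
  by (induction t) (auto simp: split_at_Node_le)

lemma split_at_nodes: "split_at t (nodes t) = (t, Leaf)"
  by (induction t) (auto simp: split_at_Node_gt)

lemma nodes_under: "nodes (under s t) = nodes s + nodes t"
  by (induction s) auto

lemma split_at_under: "split_at (under s t) (nodes s) = (s, t)"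
  by (induction s) (auto simp: split_at_0 split_at_Node_gt)

text \<open>Coassociativity of the coproduct of YSym.\<close>
lemma split_at_split_at:
  "j \<le> i \<Longrightarrow> i \<le> nodes t \<Longrightarrow>
    split_at (fst (split_at t i)) j = (fst (split_at t j), fst (split_at (snd (split_at t j)) (i - j)))
    \<and> snd (split_at t i) = snd (split_at (snd (split_at t j)) (i - j))"
proof (induction t arbitrary: i j)
  case (Node l r)
  consider "i \<le> nodes l" | "j \<le> nodes l" "\<not> i \<le> nodes l" | "\<not> j \<le> nodes l"
    using Node.prems by linarith
  then show ?case
  proof cases
    case 1
    then show ?thesis
      using Node.IH(1)[of j i] Node.prems nodes_split_at[of j l]
      by (simp add: split_at_Node_le)
  next
    case 2
    then show ?thesis
      using nodes_split_at[of j l] by (simp add: split_at_Node_le split_at_Node_gt)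
  next
    case 3
    then show ?thesis
      using Node.IH(2)[of "j - nodes l - 1" "i - nodes l - 1"] Node.prems
        nodes_split_at[of "i - nodes l - 1" r]
      by (simp add: split_at_Node_gt)
  qed
qed simp

lemma sum_atMost_triangle:
  fixes g :: "nat \<Rightarrow> nat \<Rightarrow> 'a::comm_monoid_add"
  shows "(\<Sum>k\<le>n. \<Sum>j\<le>k. g j (k - j)) = (\<Sum>j\<le>n. \<Sum>l\<le>n - j. g j l)"
proof -
  have "(\<Sum>k\<le>n. \<Sum>j\<le>k. g j (k - j)) = (\<Sum>(j, l)\<in>{(j, l). j + l \<le> n}. g j l)"
    by (rule sum.triangle_reindex_eq[symmetric])
  also have "{(j, l). j + l \<le> n} = Sigma {..n} (\<lambda>j. {..n - j})"
    by auto
  also have "(\<Sum>(j, l)\<in>Sigma {..n} (\<lambda>j. {..n - j}). g j l) = (\<Sum>j\<le>n. \<Sum>l\<le>n - j. g j l)"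
    by (rule sum.Sigma[symmetric]) auto
  finally show ?thesis .
qed

lemma lr_mult_assoc: "lr_mult (lr_mult a b) c = lr_mult a (lr_mult b c)"
proof
  fix t
  let ?n = "nodes t"
  define g where "g j l = a (fst (split_at t j)) * b (fst (split_at (snd (split_at t j)) l))
    * c (snd (split_at (snd (split_at t j)) l))" for j l
  have "lr_mult (lr_mult a b) c t = (\<Sum>i\<le>?n. \<Sum>j\<le>i. g j (i - j))"
    unfolding lr_mult_def sum_distrib_right
  proof (rule sum.cong)
    fix i assume i: "i \<in> {..?n}"
    then have "fst (split_at (fst (split_at t i)) j) = fst (split_at t j)
        \<and> snd (split_at (fst (split_at t i)) j) = fst (split_at (snd (split_at t j)) (i - j))
        \<and> snd (split_at t i) = snd (split_at (snd (split_at t j)) (i - j))" if "j \<le> i" for j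
      using that split_at_split_at[of j i t] by simp
    then show "(\<Sum>j\<le>nodes (fst (split_at t i)). a (fst (split_at (fst (split_at t i)) j))
        * b (snd (split_at (fst (split_at t i)) j)) * c (snd (split_at t i))) = (\<Sum>j\<le>i. g j (i - j))"
      using i nodes_split_at[of i t] by (simp add: g_def)
  qed simp
  also have "\<dots> = (\<Sum>j\<le>?n. \<Sum>l\<le>?n - j. g j l)"
    by (rule sum_atMost_triangle)
  also have "\<dots> = lr_mult a (lr_mult b c) t"
    unfolding lr_mult_def sum_distrib_left
  proof (rule sum.cong)
    fix j assume "j \<in> {..?n}"
    then show "(\<Sum>l\<le>?n - j. g j l) = (\<Sum>l\<le>nodes (snd (split_at t j)). a (fst (split_at t j))
        * (b (fst (split_at (snd (split_at t j)) l)) * c (snd (split_at (snd (split_at t j)) l))))"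
      using nodes_split_at[of j t] by (simp add: g_def mult.assoc)
  qed simp
  finally show "lr_mult (lr_mult a b) c t = lr_mult a (lr_mult b c) t" .
qed

lemma nodes_eq_0_iff: "nodes t = 0 \<longleftrightarrow> t = Leaf"
  by (cases t) auto

lemma lr_mult_one_left: "lr_mult lr_one a = a"
proof
  fix t
  have "fst (split_at t i) = Leaf \<longleftrightarrow> i = 0" if "i \<le> nodes t" for i
    using nodes_eq_0_iff[of "fst (split_at t i)"] nodes_split_at[OF that] by auto
  then have "lr_mult lr_one a t = (\<Sum>i\<le>nodes t. if i = 0 then a t else 0)"
    unfolding lr_mult_def lr_one_def by (intro sum.cong) (auto simp: split_at_0)
  then show "lr_mult lr_one a t = a t" by simp
qed

lemma lr_mult_one_right: "lr_mult a lr_one = a"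
proof
  fix t
  have "snd (split_at t i) = Leaf \<longleftrightarrow> i = nodes t" if "i \<le> nodes t" for i
    using nodes_eq_0_iff[of "snd (split_at t i)"] nodes_split_at[OF that] that by auto
  then have "lr_mult a lr_one t = (\<Sum>i\<le>nodes t. if i = nodes t then a t else 0)"
    unfolding lr_mult_def lr_one_def by (intro sum.cong) (auto simp: split_at_nodes)
  then show "lr_mult a lr_one t = a t" by simp
qed

lemma rot_split_at_mono:
  "rot u v \<Longrightarrow> tamari_le (fst (split_at u k)) (fst (split_at v k))
    \<and> tamari_le (snd (split_at u k)) (snd (split_at v k))"
proof (induction arbitrary: k rule: rot.induct)
  case (rot_root a b c)
  consider "k \<le> nodes a" | "\<not> k \<le> nodes a" "k - nodes a - 1 \<le> nodes b"
    | "\<not> k \<le> nodes a" "\<not> k - nodes a - 1 \<le> nodes b"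
    by linarith
  then show ?case
  proof cases
    case 1
    then show ?thesis by (simp add: split_at_Node_le rot_imp_tamari_le rot.rot_root)
  next
    case 2
    then have "k \<le> nodes (Node a b)" by simp
    then show ?thesis using 2 by (simp add: split_at_Node_le split_at_Node_gt)
  next
    case 3
    then have "\<not> k \<le> nodes (Node a b)" and "k - nodes (Node a b) - 1 = k - nodes a - 1 - nodes b - 1"
      by simp_all
    then show ?thesis
      using 3 by (simp add: split_at_Node_le split_at_Node_gt rot_imp_tamari_le rot.rot_root
          del: nodes.simps)
  qed
next
  case (rot_left l l' r)
  then show ?case
    by (cases "k \<le> nodes l")
      (auto simp: rot_nodes split_at_Node_le split_at_Node_gt tamari_le_Node_left
        intro: rot_imp_tamari_le rot.rot_left)
next
  case (rot_right r r' l)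
  then show ?case
    by (cases "k \<le> nodes l")
      (auto simp: rot_nodes split_at_Node_le split_at_Node_gt tamari_le_Node_right
        intro: rot_imp_tamari_le rot.rot_right)
qed

lemma tamari_le_split_at_mono:
  assumes "tamari_le u v"
  shows "tamari_le (fst (split_at u k)) (fst (split_at v k))
    \<and> tamari_le (snd (split_at u k)) (snd (split_at v k))"
proof -
  from assms have "rot\<^sup>*\<^sup>* u v" by (simp add: tamari_le_def)
  then show ?thesis
  proof (induction rule: rtranclp_induct)
    case (step v w)
    then show ?case
      using rot_split_at_mono[of v w k] tamari_le_trans by blast
  qed simp
qed

lemma rot_under_left: "rot s s' \<Longrightarrow> rot (under s t) (under s' t)"
  by (induction rule: rot.induct) (auto intro: rot.intros)

lemma tamari_le_under_left: "tamari_le s s' \<Longrightarrow> tamari_le (under s t) (under s' t)"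
  unfolding tamari_le_def
  by (induction rule: rtranclp_induct) (auto intro: rtranclp.rtrancl_into_rtrancl rot_under_left)

lemma tamari_le_under_right: "tamari_le t t' \<Longrightarrow> tamari_le (under s t) (under s t')"
  by (induction s) (auto intro: tamari_le_Node_right)

lemma tamari_le_Node_under: "tamari_le (Node (under a b) r) (under a (Node b r))"
proof (induction a)
  case (Node a1 a2)
  have "tamari_le (Node (Node a1 (under a2 b)) r) (Node a1 (Node (under a2 b) r))"
    by (rule rot_imp_tamari_le) (rule rot.rot_root)
  also have "tamari_le \<dots> (Node a1 (under a2 (Node b r)))"
    using Node.IH(2) by (rule tamari_le_Node_right)
  finally show ?case by simp
qed simp

lemma tamari_le_under_split_at: "tamari_le u (under (fst (split_at u k)) (snd (split_at u k)))"
proof (induction u arbitrary: k)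
  case (Node l r)
  show ?case
  proof (cases "k \<le> nodes l")
    case True
    have "tamari_le (Node l r) (Node (under (fst (split_at l k)) (snd (split_at l k))) r)"
      using Node.IH(1) by (rule tamari_le_Node_left)
    also have "tamari_le \<dots> (under (fst (split_at l k)) (Node (snd (split_at l k)) r))"
      by (rule tamari_le_Node_under)
    finally show ?thesis
      using True by (simp add: split_at_Node_le)
  next
    case False
    then show ?thesis
      using Node.IH(2) by (simp add: split_at_Node_gt tamari_le_Node_right)
  qed
qed simp

lemma tamari_le_under_iff:
  "tamari_le u (under s t) \<longleftrightarrow> nodes s \<le> nodes u
    \<and> tamari_le (fst (split_at u (nodes s))) s \<and> tamari_le (snd (split_at u (nodes s))) t"
proof
  assume le: "tamari_le u (under s t)"
  then have "nodes u = nodes s + nodes t"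
    by (simp add: tamari_le_nodes nodes_under)
  then show "nodes s \<le> nodes u
    \<and> tamari_le (fst (split_at u (nodes s))) s \<and> tamari_le (snd (split_at u (nodes s))) t"
    using tamari_le_split_at_mono[OF le, of "nodes s"] by (simp add: split_at_under)
next
  let ?a = "fst (split_at u (nodes s))" and ?b = "snd (split_at u (nodes s))"
  assume pieces: "nodes s \<le> nodes u \<and> tamari_le ?a s \<and> tamari_le ?b t"
  have "tamari_le u (under ?a ?b)"
    by (rule tamari_le_under_split_at)
  also have "tamari_le \<dots> (under s ?b)"
    using pieces by (simp add: tamari_le_under_left)
  also have "tamari_le \<dots> (under s t)"
    using pieces by (simp add: tamari_le_under_right)
  finally show "tamari_le u (under s t)" .
qed

lemma down_indicator_mult: "lr_mult (down_indicator s) (down_indicator t) = down_indicator (under s t)"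
proof
  fix u
  let ?g = "\<lambda>i. down_indicator s (fst (split_at u i)) * down_indicator t (snd (split_at u i))"
  have "?g i = 0" if "i \<le> nodes u" "i \<noteq> nodes s" for i
    using that nodes_split_at[of i u] by (auto simp: down_indicator_def dest: tamari_le_nodes)
  then have "lr_mult (down_indicator s) (down_indicator t) u
      = (\<Sum>i\<le>nodes u. if i = nodes s then ?g i else 0)"
    unfolding lr_mult_def by (intro sum.cong) auto
  also have "\<dots> = down_indicator (under s t) u"
    using tamari_le_under_iff[of u s t] by (auto simp: down_indicator_def)
  finally show "lr_mult (down_indicator s) (down_indicator t) u = down_indicator (under s t) u" .
qed

lemma down_indicator_Leaf: "down_indicator Leaf = lr_one"
  using tamari_le_nodes nodes_eq_0_iff
  by (fastforce simp: down_indicator_def lr_one_def)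

definition under_list :: "tree list \<Rightarrow> tree" where
  "under_list w = foldr under w Leaf"

fun progressive_factors :: "tree \<Rightarrow> tree list" where
  "progressive_factors Leaf = []"
| "progressive_factors (Node l r) = Node l Leaf # progressive_factors r"

lemma under_list_progressive_factors: "under_list (progressive_factors t) = t"
  by (induction t) (simp_all add: under_list_def)

lemma progressive_factors_under_list:
  "w \<in> lists {t. progressive t} \<Longrightarrow> progressive_factors (under_list w) = w"
  by (induction w) (auto simp: under_list_def progressive_def)

lemma progressive_factors_in_lists: "progressive_factors t \<in> lists {t. progressive t}"
  by (induction t) (simp_all add: progressive_def)

lemma word_mono_eq_down_indicator: "word_mono w = down_indicator (under_list w)"
  by (induction w)
    (simp_all add: word_mono_def under_list_def down_indicator_Leaf Mdual_eq_down_indicator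
      down_indicator_mult)

lemma down_indicators_independent:
  assumes "finite T" and "(\<lambda>v. \<Sum>t\<in>T. c t * down_indicator t v) = (\<lambda>v. 0)"
  shows "\<forall>t\<in>T. c t = 0"
proof (rule ccontr)
  let ?S = "{t\<in>T. c t \<noteq> 0}"
  assume "\<not> (\<forall>t\<in>T. c t = 0)"
  then have "?S \<noteq> {}" by auto
  then obtain t\<^sub>0 where t\<^sub>0: "t\<^sub>0 \<in> ?S" and max: "\<And>t. t \<in> ?S \<Longrightarrow> tamari_le t\<^sub>0 t \<Longrightarrow> t\<^sub>0 = t"
    using tamari.finite_has_maximal[of ?S] assms(1) by auto
  have "c t * down_indicator t t\<^sub>0 = (if t = t\<^sub>0 then c t\<^sub>0 else 0)" if "t \<in> T" for t
    using that max[of t] by (auto simp: down_indicator_def)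
  then have "(\<Sum>t\<in>T. c t * down_indicator t t\<^sub>0) = c t\<^sub>0"
    using assms(1) t\<^sub>0 by (simp cong: sum.cong)
  then show False
    using fun_cong[OF assms(2), of t\<^sub>0] t\<^sub>0 by simp
qed

text \<open>Induction on a finite down-closed set D: removing a Tamari-maximal element
  keeps D down-closed, and subtracting a multiple of its down-indicator clears it
  from the support.\<close>
lemma down_closed_support_span:
  assumes "finite D" and "\<And>u v. u \<in> D \<Longrightarrow> tamari_le v u \<Longrightarrow> v \<in> D"
    and "\<And>u. \<phi> u \<noteq> 0 \<Longrightarrow> u \<in> D"
  shows "\<exists>c. \<phi> = (\<lambda>v. \<Sum>t\<in>D. c t * down_indicator t v)"
  using assms
proof (induction D arbitrary: \<phi> rule: finite_psubset_induct)
  case (psubset D)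
  show ?case
  proof (cases "D = {}")
    case True
    then show ?thesis
      using psubset.prems(2) by auto
  next
    case False
    then obtain u where u: "u \<in> D" and max: "\<And>w. w \<in> D \<Longrightarrow> tamari_le u w \<Longrightarrow> u = w"
      using tamari.finite_has_maximal[OF psubset.hyps(1)] by auto
    let ?\<psi> = "\<lambda>v. \<phi> v - \<phi> u * down_indicator u v"
    have "\<exists>c. ?\<psi> = (\<lambda>v. \<Sum>t\<in>D - {u}. c t * down_indicator t v)"
    proof (rule psubset.IH)
      show "D - {u} \<subset> D"
        using u by auto
      show "v \<in> D - {u}" if "w \<in> D - {u}" "tamari_le v w" for v w
        using that psubset.prems(1) max by blast
      show "v \<in> D - {u}" if "?\<psi> v \<noteq> 0" for v
        using that psubset.prems u by (auto simp: down_indicator_def split: if_splits)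
    qed
    then obtain c where c: "?\<psi> = (\<lambda>v. \<Sum>t\<in>D - {u}. c t * down_indicator t v)" ..
    have "\<phi> v = (\<Sum>t\<in>D. (c(u := \<phi> u)) t * down_indicator t v)" for v
    proof -
      have "(\<Sum>t\<in>D - {u}. (c(u := \<phi> u)) t * down_indicator t v) = ?\<psi> v"
        using fun_cong[OF c, of v] by (auto intro: sum.cong)
      then show ?thesis
        using psubset.hyps(1) u by (simp add: sum.remove)
    qed
    then show ?thesis by blast
  qed
qed

lemma down_indicators_span:
  assumes "\<phi> \<in> LR"
  shows "\<exists>T c. finite T \<and> \<phi> = (\<lambda>v. \<Sum>t\<in>T. c t * down_indicator t v)"
proof -
  let ?S = "{u. \<phi> u \<noteq> 0}"
  have "finite ?S"
    using assms by (simp add: LR_def fin_supp_def)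
  then have bound: "nodes u \<le> Max (nodes ` ?S)" if "\<phi> u \<noteq> 0" for u
    using that by simp
  have "\<exists>c. \<phi> = (\<lambda>v. \<Sum>t\<in>{t. nodes t \<le> Max (nodes ` ?S)}. c t * down_indicator t v)"
    by (rule down_closed_support_span) (auto simp: finite_nodes_le bound dest: tamari_le_nodes)
  then show ?thesis
    using finite_nodes_le by blast
qed

lemma word_monos_independent:
  assumes "finite W" and "W \<subseteq> lists {t. progressive t}"
    and "(\<lambda>v. \<Sum>w\<in>W. c w * word_mono w v) = (\<lambda>v. 0)"
  shows "\<forall>w\<in>W. c w = 0"
proof -
  have inj: "inj_on under_list W"
    by (rule inj_on_inverseI[where g = progressive_factors])
      (use assms(2) progressive_factors_under_list in blast)
  let ?d = "\<lambda>t. c (inv_into W under_list t)"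
  have "(\<Sum>w\<in>W. c w * word_mono w v) = (\<Sum>t\<in>under_list ` W. ?d t * down_indicator t v)" for v
    by (simp add: sum.reindex[OF inj] word_mono_eq_down_indicator inv_into_f_f[OF inj])
  then have "\<forall>t\<in>under_list ` W. ?d t = 0"
    using assms(1,3) by (intro down_indicators_independent) simp_all
  then show ?thesis
    by (simp add: inv_into_f_f[OF inj])
qed

lemma word_monos_span:
  assumes "\<phi> \<in> LR"
  shows "\<exists>W c. finite W \<and> W \<subseteq> lists {t. progressive t}
    \<and> \<phi> = (\<lambda>v. \<Sum>w\<in>W. c w * word_mono w v)"
proof -
  obtain T c where T: "finite T" and \<phi>: "\<phi> = (\<lambda>v. \<Sum>t\<in>T. c t * down_indicator t v)"
    using down_indicators_span[OF assms] by blast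
  have inj: "inj_on progressive_factors T"
    by (rule inj_on_inverseI[where g = under_list]) (rule under_list_progressive_factors)
  have "\<phi> = (\<lambda>v. \<Sum>w\<in>progressive_factors ` T. c (under_list w) * word_mono w v)"
    unfolding \<phi> by (simp add: sum.reindex[OF inj] word_mono_eq_down_indicator
        under_list_progressive_factors)
  moreover have "progressive_factors ` T \<subseteq> lists {t. progressive t}"
    using progressive_factors_in_lists by blast
  ultimately show ?thesis
    using T by (intro exI[of _ "progressive_factors ` T"] exI[of _ "c \<circ> under_list"]) simp
qed

theorem theorem8p1:
  shows "free_assoc_on {t. progressive t} Mdual
         \<and> (\<forall>s t. lr_mult (Mdual s) (Mdual t) = Mdual (under s t))"
proof
  show "free_assoc_on {t. progressive t} Mdual"
    unfolding free_assoc_on_def word_mono_def[symmetric]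
  proof (intro conjI allI impI)
    fix W and c :: "tree list \<Rightarrow> rat"
    assume "finite W" "W \<subseteq> lists {t. progressive t}"
      and "(\<lambda>t. \<Sum>w\<in>W. c w * word_mono w t) = (\<lambda>t. 0)"
    then show "\<forall>w\<in>W. c w = 0"
      by (rule word_monos_independent)
  next
    show "\<forall>\<phi>\<in>LR. \<exists>W c. finite W \<and> W \<subseteq> lists {t. progressive t}
        \<and> \<phi> = (\<lambda>t. \<Sum>w\<in>W. c w * word_mono w t)"
      using word_monos_span by blast
  qed (simp_all add: lr_mult_assoc lr_mult_one_left lr_mult_one_right)
  show "\<forall>s t. lr_mult (Mdual s) (Mdual t) = Mdual (under s t)"
    by (simp add: Mdual_eq_down_indicator down_indicator_mult)
qed

end
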